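(* Let $n \ge 2$, $k \ge 0$, and let $n_1, \dots, n_k$ be even integers with $1 \le n_i \le 2n-2$. Then $\mathcal{P}_n(n_1,\dots,n_k;-n_k,\dots,-n_1)$ is a regular presentation of $Q_{4n}$.
   Context: $Q_{4n}$ is identified with $\langle x, y \mid x^n y^{-2}, xyxy^{-1} \rangle$. A presentation $\langle x, y \mid x^n y^{-2}, R\rangle$ is regular if $x \mapsto x$, $y \mapsto y$ induces a group isomorphism from the group it presents to $Q_{4n}$. For integers $k\ge0$, $n_1,\dots,n_k,m_1,\dots,m_k$, with $n_{k+1} = 1 - \sum_{i=1}^k n_i$, $m_{k+1} = 1 - \sum_{i=1}^k m_i$, $\mathcal{P}_n(n_1,\dots,n_k;m_1,\dots,m_k) = \langle x, y \mid x^n y^{-2},\ x^{n_1} y x^{m_1} y^{-1} \cdots x^{n_{k+1}} y x^{m_{k+1}} y^{-1} \rangle$; thus here $m_i = -n_{k+1-i}$ for $1 \le i \le k$. *)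

theory Defs
  imports "HOL-Algebra.Group"
begin

text \<open>Group presentations on the two generators x, y, built from words in the
free monoid on the letters x, x^-1, y, y^-1.  A letter is (inverted?, generator).\<close>

datatype gen = GX | GY

type_synonym word = "(bool \<times> gen) list"

definition inv_letter :: "bool \<times> gen \<Rightarrow> bool \<times> gen" where
  "inv_letter l = (\<not> fst l, snd l)"

text \<open>The congruence on words generated by free cancellation and the relators R;
its classes are the elements of the group presented by the generators and R.\<close>
inductive word_eq :: "word set \<Rightarrow> word \<Rightarrow> word \<Rightarrow> bool" for R :: "word set" where
  refl: "word_eq R w w"
| sym: "word_eq R u v \<Longrightarrow> word_eq R v u"
| trans: "word_eq R u v \<Longrightarrow> word_eq R v w \<Longrightarrow> word_eq R u w"
| cancel: "word_eq R (u @ [l, inv_letter l] @ v) (u @ v)"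
| rel: "r \<in> R \<Longrightarrow> word_eq R (u @ r @ v) (u @ v)"

definition pclass :: "word set \<Rightarrow> word \<Rightarrow> word set" where
  "pclass R w = {v. word_eq R w v}"

definition presented_group :: "word set \<Rightarrow> word set monoid" where
  "presented_group R =
     \<lparr> carrier = range (pclass R),
       mult = (\<lambda>A B. {v. \<exists>a\<in>A. \<exists>b\<in>B. word_eq R (a @ b) v}),
       one = pclass R [] \<rparr>"

definition gx :: word where "gx = [(False, GX)]"
definition gy :: word where "gy = [(False, GY)]"
definition gy_inv :: word where "gy_inv = [(True, GY)]"

definition gpow :: "gen \<Rightarrow> int \<Rightarrow> word" where
  "gpow g k = (if 0 \<le> k then replicate (nat k) (False, g) else replicate (nat (- k)) (True, g))"

definition rel0 :: "nat \<Rightarrow> word" where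
  "rel0 n = gpow GX (int n) @ gpow GY (-2)"

definition Q :: "nat \<Rightarrow> word set monoid" where
  "Q n = presented_group {rel0 n, gx @ gy @ gx @ gy_inv}"

text \<open>The second relator of P_n(n_1..n_k; m_1..m_k):
  x^{n_1} y x^{m_1} y^-1 ... x^{n_{k+1}} y x^{m_{k+1}} y^-1,
  with n_{k+1} = 1 - sum n_i, m_{k+1} = 1 - sum m_i.\<close>
definition P_rel :: "int list \<Rightarrow> int list \<Rightarrow> word" where
  "P_rel ns ms =
     (let ns' = ns @ [1 - sum_list ns]; ms' = ms @ [1 - sum_list ms]
      in concat (map2 (\<lambda>a b. gpow GX a @ gy @ gpow GX b @ gy_inv) ns' ms'))"

definition P :: "nat \<Rightarrow> int list \<Rightarrow> int list \<Rightarrow> word set monoid" where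
  "P n ns ms = presented_group {rel0 n, P_rel ns ms}"

definition regular :: "nat \<Rightarrow> word \<Rightarrow> bool" where
  "regular n r \<longleftrightarrow>
     (\<exists>h. h \<in> iso (presented_group {rel0 n, r}) (Q n)
          \<and> h (pclass {rel0 n, r} gx) = pclass {rel0 n, gx @ gy @ gx @ gy_inv} gx
          \<and> h (pclass {rel0 n, r} gy) = pclass {rel0 n, gx @ gy @ gx @ gy_inv} gy)"

end

theory Submission
  imports Defs
begin

(*
  Work in an arbitrary group with elements x, y and put w = y x y^-1. With S the sum of the n_i,
  a = (n_1, ..., n_k, 1 - S) and b = (-n_k, ..., -n_1, 1 + S), the second relator of
  P_n(n_1, ..., n_k; -n_k, ..., -n_1) is the alternating product x^a_1 w^b_1 ... x^a_(k+1) w^b_(k+1),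
  so it is trivial as soon as w = x^-1, i.e. as soon as the dicyclic relator x y x y^-1 of Q_4n is.

  Conversely, x^n = y^2 makes conjugation by y swap x and w. Split the relator as P Q, with Q the
  last block. Since b_i = -a_(k+1-i) for i <= k, the conjugate of P is P^-1; comparing the relator
  with its conjugate gives P = w^(1-S) x^(1+S) and then w^2 = x^-2. As all n_i are even, every
  w^(n_i) becomes a power of x and the equation for P collapses to w = x^-1.

  Hence both relator sets generate the same congruence on words.
*)

lemma word_eq_context: "word_eq R u v \<Longrightarrow> word_eq R (a @ u @ b) (a @ v @ b)"
proof (induction rule: word_eq.induct)
  case (cancel u l v)
  show ?case using word_eq.cancel[of R "a @ u" l "v @ b"] by simp
next
  case (rel r u v)
  show ?case using word_eq.rel[OF rel, of "a @ u" "v @ b"] by simp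
qed (auto intro: word_eq.intros)

lemma word_eq_append: "word_eq R u u' \<Longrightarrow> word_eq R v v' \<Longrightarrow> word_eq R (u @ v) (u' @ v')"
  using word_eq_context[of R u u' "[]" v] word_eq_context[of R v v' u' "[]"]
  by (auto intro: word_eq.trans)

lemma word_eq_mono_relators:
  assumes "word_eq R u v" and "\<And>r. r \<in> R \<Longrightarrow> word_eq R' r []"
  shows "word_eq R' u v"
  using assms(1)
proof (induction rule: word_eq.induct)
  case (rel r u v)
  show ?case using word_eq_context[OF assms(2)[OF rel], of u v] by simp
qed (blast intro: word_eq.intros)+

definition word_inv :: "word \<Rightarrow> word" where
  "word_inv w = rev (map inv_letter w)"

lemma word_inv_word_inv [simp]: "word_inv (word_inv w) = w"
  by (simp add: word_inv_def inv_letter_def rev_map comp_def)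

lemma word_eq_append_word_inv: "word_eq R (w @ word_inv w) []"
proof (induction w)
  case Nil
  show ?case by (simp add: word_inv_def word_eq.refl)
next
  case (Cons l w)
  have "word_eq R ([l] @ (w @ word_inv w) @ [inv_letter l]) ([l] @ [] @ [inv_letter l])"
    using Cons by (rule word_eq_context)
  moreover have "word_eq R ([] @ [l, inv_letter l] @ []) []"
    using word_eq.cancel[of R "[]" l "[]"] by simp
  ultimately show ?case by (auto simp: word_inv_def intro: word_eq.trans)
qed

lemma word_eq_word_inv_append: "word_eq R (word_inv w @ w) []"
  using word_eq_append_word_inv[of R "word_inv w"] by simp

lemma pclass_eq_iff: "pclass R u = pclass R v \<longleftrightarrow> word_eq R u v"
  unfolding pclass_def by (auto intro: word_eq.refl word_eq.sym word_eq.trans)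

lemma carrier_presented_group: "carrier (presented_group R) = range (pclass R)"
  by (simp add: presented_group_def)

lemma pclass_in_carrier [simp]: "pclass R w \<in> carrier (presented_group R)"
  by (simp add: carrier_presented_group)

lemma one_presented_group: "\<one>\<^bsub>presented_group R\<^esub> = pclass R []"
  by (simp add: presented_group_def)

lemma mult_pclass: "pclass R u \<otimes>\<^bsub>presented_group R\<^esub> pclass R v = pclass R (u @ v)"
  unfolding presented_group_def pclass_def
  by (auto intro: word_eq.refl word_eq.trans word_eq_append)

lemma group_presented_group: "group (presented_group R)"
proof (rule groupI)
  fix x
  assume "x \<in> carrier (presented_group R)"
  then obtain w where "x = pclass R w"
    by (auto simp: carrier_presented_group)
  then show "\<exists>y\<in>carrier (presented_group R). y \<otimes>\<^bsub>presented_group R\<^esub> x = \<one>\<^bsub>presented_group R\<^esub>"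
    by (intro bexI[of _ "pclass R (word_inv w)"])
      (simp_all add: mult_pclass one_presented_group pclass_eq_iff word_eq_word_inv_append)
qed (auto simp: carrier_presented_group mult_pclass one_presented_group)

lemma word_eq_relator: "r \<in> R \<Longrightarrow> word_eq R r []"
  using word_eq.rel[of r R "[]" "[]"] by simp

lemma pclass_eq_one_iff: "pclass R w = \<one>\<^bsub>presented_group R\<^esub> \<longleftrightarrow> word_eq R w []"
  by (simp add: one_presented_group pclass_eq_iff)

lemma pclass_relator: "r \<in> R \<Longrightarrow> pclass R r = \<one>\<^bsub>presented_group R\<^esub>"
  by (simp add: pclass_eq_one_iff word_eq_relator)

lemma inv_pclass: "inv\<^bsub>presented_group R\<^esub> (pclass R w) = pclass R (word_inv w)"
proof -
  interpret group "presented_group R"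
    by (rule group_presented_group)
  show ?thesis
    by (rule inv_equality) (simp_all add: mult_pclass one_presented_group pclass_eq_iff word_eq_word_inv_append)
qed

lemma pclass_replicate: "pclass R (replicate m l) = pclass R [l] [^]\<^bsub>presented_group R\<^esub> m"
proof -
  interpret group "presented_group R"
    by (rule group_presented_group)
  show ?thesis
    by (induction m) (simp_all add: one_presented_group flip: mult_pclass replicate_append_same)
qed

lemma pclass_gpow: "pclass R (gpow g k) = pclass R [(False, g)] [^]\<^bsub>presented_group R\<^esub> k"
proof -
  interpret group "presented_group R"
    by (rule group_presented_group)
  have inv_gen: "pclass R [(True, g)] = inv\<^bsub>presented_group R\<^esub> pclass R [(False, g)]"
    unfolding inv_pclass by (simp add: word_inv_def inv_letter_def)
  show ?thesis
  proof (cases "k < 0")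
    case True
    then have "gpow g k = replicate (nat (- k)) (True, g)"
      by (simp add: gpow_def)
    with True show ?thesis
      by (simp only: pclass_replicate inv_gen nat_pow_inv[OF pclass_in_carrier] int_pow_def2 if_True)
  next
    case False
    then have "gpow g k = replicate (nat k) (False, g)"
      by (simp add: gpow_def)
    with False show ?thesis
      by (simp only: pclass_replicate int_pow_def2 if_False)
  qed
qed

lemma gy_inv_eq_word_inv: "gy_inv = word_inv gy"
  by (simp add: gy_inv_def gy_def word_inv_def inv_letter_def)

lemma pclass_dicyclic_relator:
  "pclass R (gx @ gy @ gx @ gy_inv) = pclass R gx \<otimes>\<^bsub>presented_group R\<^esub> pclass R gy
    \<otimes>\<^bsub>presented_group R\<^esub> pclass R gx \<otimes>\<^bsub>presented_group R\<^esub> inv\<^bsub>presented_group R\<^esub> pclass R gy"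
proof -
  interpret group "presented_group R"
    by (rule group_presented_group)
  show ?thesis
    by (simp add: gy_inv_eq_word_inv m_assoc flip: mult_pclass inv_pclass)
qed

lemma pclass_rel0:
  "pclass R (rel0 n) = pclass R gx [^]\<^bsub>presented_group R\<^esub> int n
    \<otimes>\<^bsub>presented_group R\<^esub> inv\<^bsub>presented_group R\<^esub> (pclass R gy [^]\<^bsub>presented_group R\<^esub> (2::int))"
proof -
  interpret group "presented_group R"
    by (rule group_presented_group)
  show ?thesis
    by (simp add: rel0_def pclass_gpow gx_def gy_def int_pow_neg flip: mult_pclass)
qed

lemma sum_list_map_uminus_rev [simp]:
  "sum_list (map uminus (rev xs)) = - sum_list (xs :: 'a :: ab_group_add list)"
  by (induction xs) auto

(* The ordered product of a list; HOL-Algebra's finprod is only available in commutative monoids. *)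
definition multlist :: "('a, 'b) monoid_scheme \<Rightarrow> 'a list \<Rightarrow> 'a" where
  "multlist G xs = foldr (\<otimes>\<^bsub>G\<^esub>) xs \<one>\<^bsub>G\<^esub>"

context monoid
begin

lemma multlist_Nil [simp]: "multlist G [] = \<one>"
  by (simp add: multlist_def)

lemma multlist_Cons [simp]: "multlist G (x # xs) = x \<otimes> multlist G xs"
  by (simp add: multlist_def)

lemma multlist_closed [simp]: "set xs \<subseteq> carrier G \<Longrightarrow> multlist G xs \<in> carrier G"
  by (induction xs) auto

lemma multlist_append:
  "set xs \<subseteq> carrier G \<Longrightarrow> set ys \<subseteq> carrier G \<Longrightarrow>
    multlist G (xs @ ys) = multlist G xs \<otimes> multlist G ys"
  by (induction xs) (auto simp: m_assoc)

end

lemma (in group) inv_multlist: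
  "set xs \<subseteq> carrier G \<Longrightarrow> inv (multlist G xs) = multlist G (rev (map (\<lambda>x. inv x) xs))"
  by (induction xs) (simp_all add: inv_mult_group multlist_append subset_eq)

lemma (in group_hom) hom_multlist:
  "set xs \<subseteq> carrier G \<Longrightarrow> h (multlist G xs) = multlist H (map h xs)"
  by (induction xs) auto

context group
begin

lemma conj_group_hom: "g \<in> carrier G \<Longrightarrow> group_hom G G (\<lambda>z. g \<otimes> z \<otimes> inv g)"
  by unfold_locales (auto simp: hom_def m_assoc inv_solve_left)

lemma conj_int_pow:
  "g \<in> carrier G \<Longrightarrow> x \<in> carrier G \<Longrightarrow> g \<otimes> x [^] (k::int) \<otimes> inv g = (g \<otimes> x \<otimes> inv g) [^] k"
  using group_hom.hom_int_pow[OF conj_group_hom] by blast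

definition alternating_prod :: "'a \<Rightarrow> 'a \<Rightarrow> int list \<Rightarrow> int list \<Rightarrow> 'a" where
  "alternating_prod u v as bs = multlist G (map2 (\<lambda>a b. u [^] a \<otimes> v [^] b) as bs)"

lemma alternating_prod_closed [simp]:
  "u \<in> carrier G \<Longrightarrow> v \<in> carrier G \<Longrightarrow> alternating_prod u v as bs \<in> carrier G"
  by (auto simp: alternating_prod_def intro!: multlist_closed)

lemma alternating_prod_snoc:
  assumes "u \<in> carrier G" "v \<in> carrier G" "length as = length bs"
  shows "alternating_prod u v (as @ [a]) (bs @ [b]) = alternating_prod u v as bs \<otimes> (u [^] a \<otimes> v [^] b)"
  using assms by (simp add: alternating_prod_def, subst multlist_append) auto

lemma conj_alternating_prod:
  assumes "g \<in> carrier G" "u \<in> carrier G" "v \<in> carrier G"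
  shows "g \<otimes> alternating_prod u v as bs \<otimes> inv g =
    alternating_prod (g \<otimes> u \<otimes> inv g) (g \<otimes> v \<otimes> inv g) as bs"
proof -
  interpret conj: group_hom G G "\<lambda>z. g \<otimes> z \<otimes> inv g"
    using assms(1) by (rule conj_group_hom)
  have "g \<otimes> alternating_prod u v as bs \<otimes> inv g =
      multlist G (map (\<lambda>z. g \<otimes> z \<otimes> inv g) (map2 (\<lambda>a b. u [^] a \<otimes> v [^] b) as bs))"
    unfolding alternating_prod_def using assms by (intro conj.hom_multlist) auto
  also have "map (\<lambda>z. g \<otimes> z \<otimes> inv g) (map2 (\<lambda>a b. u [^] a \<otimes> v [^] b) as bs) =
      map2 (\<lambda>a b. (g \<otimes> u \<otimes> inv g) [^] a \<otimes> (g \<otimes> v \<otimes> inv g) [^] b) as bs"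
    using assms by (auto simp: conj.hom_int_pow)
  finally show ?thesis
    unfolding alternating_prod_def .
qed

lemma inv_alternating_prod_map_uminus_rev:
  assumes "u \<in> carrier G" "v \<in> carrier G"
  shows "inv (alternating_prod u v as (map uminus (rev as))) =
    alternating_prod v u as (map uminus (rev as))"
proof -
  have "rev (map (\<lambda>z. inv z) (map2 (\<lambda>a b. u [^] a \<otimes> v [^] b) as (map uminus (rev as)))) =
      map2 (\<lambda>a b. v [^] a \<otimes> u [^] b) as (map uminus (rev as))"
    using assms by (intro nth_equalityI) (auto simp: rev_nth inv_mult_group int_pow_neg)
  then show ?thesis
    using assms unfolding alternating_prod_def by (subst inv_multlist) auto
qed

lemma alternating_prod_eq_int_pow:
  assumes "u \<in> carrier G" "length as = length bs" "\<forall>b\<in>set bs. v [^] b = u [^] (- b)"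
  shows "alternating_prod u v as bs = u [^] (sum_list as - sum_list bs)"
  using assms(2,3)
proof (induction as bs rule: list_induct2)
  case (Cons a as b bs)
  have "alternating_prod u v (a # as) (b # bs) =
      u [^] a \<otimes> u [^] (- b) \<otimes> u [^] (sum_list as - sum_list bs)"
    using Cons by (simp add: alternating_prod_def)
  also have "\<dots> = u [^] (a + - b + (sum_list as - sum_list bs))"
    by (simp only: int_pow_mult[OF assms(1)])
  finally show ?case
    by (simp add: algebra_simps)
qed (simp add: alternating_prod_def)

lemma multlist_conj_blocks:
  assumes "x \<in> carrier G" "y \<in> carrier G"
  shows "multlist G (map2 (\<lambda>a b. x [^] a \<otimes> y \<otimes> x [^] b \<otimes> inv y) as bs) =
    alternating_prod x (y \<otimes> x \<otimes> inv y) as bs"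
proof -
  have block: "x [^] a \<otimes> y \<otimes> x [^] b \<otimes> inv y = x [^] a \<otimes> (y \<otimes> x \<otimes> inv y) [^] b" for a b :: int
    using assms by (subst conj_int_pow[symmetric]) (auto simp: m_assoc)
  show ?thesis
    by (simp add: alternating_prod_def block)
qed

lemma alternating_relator_of_dicyclic_relation:
  assumes "x \<in> carrier G" "y \<in> carrier G" "x \<otimes> y \<otimes> x \<otimes> inv y = \<one>" "length as = length bs"
  shows "alternating_prod x (y \<otimes> x \<otimes> inv y) (as @ [1 - sum_list as]) (bs @ [1 - sum_list bs]) = \<one>"
proof -
  have right_inv: "x \<otimes> (y \<otimes> x \<otimes> inv y) = \<one>"
    using assms(1-3) by (simp add: m_assoc)
  have "inv x = y \<otimes> x \<otimes> inv y"
    using inv_equality[OF inv_comm[OF right_inv]] assms(1,2) by simp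
  then have "\<forall>b\<in>set (bs @ [1 - sum_list bs]). (y \<otimes> x \<otimes> inv y) [^] b = x [^] (- b)"
    using assms(1) by (simp flip: int_pow_inv add: int_pow_neg)
  then show ?thesis
    using assms(1,4) by (simp add: alternating_prod_eq_int_pow)
qed

lemma conj_conj_eq_of_int_pow_eq_square:
  assumes "x \<in> carrier G" "y \<in> carrier G" "x [^] (k::int) = y [^] (2::int)"
  shows "y \<otimes> (y \<otimes> x \<otimes> inv y) \<otimes> inv y = x"
proof -
  have square: "y \<otimes> y = x [^] k"
    using assms int_pow_mult[of y 1 1] by simp
  have commute: "x [^] k \<otimes> x = x \<otimes> x [^] k"
    using assms(1) int_pow_mult[of x k 1] int_pow_mult[of x 1 k] by (simp add: add.commute)
  have "y \<otimes> (y \<otimes> x \<otimes> inv y) \<otimes> inv y = (y \<otimes> y) \<otimes> x \<otimes> inv (y \<otimes> y)"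
    using assms(1,2) by (simp add: m_assoc inv_mult_group)
  also have "\<dots> = x \<otimes> x [^] k \<otimes> inv (x [^] k)"
    by (simp only: square commute)
  also have "\<dots> = x"
    using assms(1) by (simp add: m_assoc)
  finally show ?thesis .
qed

lemma alternating_prod_eq_of_conj_swap:
  assumes "g \<in> carrier G" "u \<in> carrier G" "v \<in> carrier G"
    and "g \<otimes> u \<otimes> inv g = v" "g \<otimes> v \<otimes> inv g = u"
    and "alternating_prod u v (as @ [1 - sum_list as]) (map uminus (rev as) @ [1 + sum_list as]) = \<one>"
  shows "alternating_prod u v as (map uminus (rev as)) =
    v [^] (1 - sum_list as) \<otimes> u [^] (1 + sum_list as)"
proof -
  have "g \<otimes> alternating_prod u v (as @ [1 - sum_list as]) (map uminus (rev as) @ [1 + sum_list as])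
      \<otimes> inv g = \<one>"
    using assms(1,6) by simp
  then have "alternating_prod v u (as @ [1 - sum_list as]) (map uminus (rev as) @ [1 + sum_list as]) = \<one>"
    using assms(1-5) by (simp add: conj_alternating_prod)
  then have right_inv: "alternating_prod v u as (map uminus (rev as)) \<otimes>
      (v [^] (1 - sum_list as) \<otimes> u [^] (1 + sum_list as)) = \<one>"
    using assms(2,3) by (simp add: alternating_prod_snoc)
  have "inv (alternating_prod v u as (map uminus (rev as))) =
      v [^] (1 - sum_list as) \<otimes> u [^] (1 + sum_list as)"
    using inv_equality[OF inv_comm[OF right_inv]] assms(2,3) by simp
  then show ?thesis
    using assms(2,3) by (simp add: inv_alternating_prod_map_uminus_rev)
qed

lemma int_pow_even_eq_of_square_eq:
  assumes "u \<in> carrier G" "v \<in> carrier G" "v [^] (2::int) = u [^] (- 2::int)" "even (k::int)"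
  shows "v [^] k = u [^] (- k)"
proof -
  obtain c :: int where "k = 2 * c"
    using assms(4) by blast
  then show ?thesis
    using assms(1-3) int_pow_pow[of v 2 c] int_pow_pow[of u "- 2" c] by simp
qed

lemma eq_inv_mult_inv_of_mult_eq_one:
  assumes "a \<in> carrier G" "b \<in> carrier G" "c \<in> carrier G" "a \<otimes> b \<otimes> c = \<one>"
  shows "b = inv a \<otimes> inv c"
proof -
  have "inv c = a \<otimes> b"
    using assms by (intro inv_equality) auto
  then show ?thesis
    using assms(1-3) by (simp add: inv_solve_left)
qed

lemma eq_inv_of_alternating_prod_eq:
  assumes u: "u \<in> carrier G" and v: "v \<in> carrier G"
    and square: "u [^] (2::int) = v [^] (- 2::int)" and even: "\<forall>a\<in>set as. even a"
    and prod: "alternating_prod u v as (map uminus (rev as)) =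
      v [^] (1 - sum_list as) \<otimes> u [^] (1 + sum_list as)"
  shows "v = inv u"
proof -
  define S where "S = sum_list as"
  have even_pow: "v [^] b = u [^] (- b)" if "even b" for b :: int
    using int_pow_even_eq_of_square_eq[OF v u square, of "- b"] that by simp
  have "even S"
    using even unfolding S_def by (induction as) auto
  have "alternating_prod u v as (map uminus (rev as)) = u [^] (S - sum_list (map uminus (rev as)))"
    using u even even_pow unfolding S_def by (intro alternating_prod_eq_int_pow) auto
  also have "S - sum_list (map uminus (rev as)) = 2 * S"
    by (simp add: S_def)
  finally have "u [^] (2 * S) = v [^] (1 - S) \<otimes> u [^] (1 + S)"
    using prod by (simp add: S_def)
  then have v_pow: "v [^] (1 - S) = u [^] (2 * S) \<otimes> inv (u [^] (1 + S))"
    using u v by (subst inv_solve_right) auto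
  have "v = v [^] ((1 - S) - (- S))"
    using v by simp
  also have "\<dots> = v [^] (1 - S) \<otimes> inv (v [^] (- S))"
    using v by (rule int_pow_diff)
  also have "\<dots> = u [^] (2 * S) \<otimes> inv (u [^] (1 + S)) \<otimes> inv (u [^] S)"
    using v_pow even_pow[of "- S"] \<open>even S\<close> by simp
  also have "\<dots> = u [^] (2 * S - (1 + S) - S)"
    by (simp only: int_pow_diff[OF u])
  also have "\<dots> = inv u"
    using u int_pow_neg[of u 1] by simp
  finally show ?thesis .
qed

lemma dicyclic_relation_of_alternating_relator:
  assumes x: "x \<in> carrier G" and y: "y \<in> carrier G" and power: "x [^] (k::int) = y [^] (2::int)"
    and even: "\<forall>a\<in>set as. even a"
    and relator: "alternating_prod x (y \<otimes> x \<otimes> inv y)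
      (as @ [1 - sum_list as]) (map uminus (rev as) @ [1 + sum_list as]) = \<one>"
  shows "x \<otimes> y \<otimes> x \<otimes> inv y = \<one>"
proof -
  define w where "w = y \<otimes> x \<otimes> inv y"
  define S where "S = sum_list as"
  have w: "w \<in> carrier G"
    using x y by (simp add: w_def)
  have swap: "alternating_prod x w as (map uminus (rev as)) = w [^] (1 - S) \<otimes> x [^] (1 + S)"
    unfolding S_def using x y w relator conj_conj_eq_of_int_pow_eq_square[OF x y power]
    by (intro alternating_prod_eq_of_conj_swap[of y]) (auto simp: w_def)
  have "alternating_prod x w as (map uminus (rev as)) \<otimes> (x [^] (1 - S) \<otimes> w [^] (1 + S)) = \<one>"
    using relator x w by (simp add: alternating_prod_snoc w_def S_def)
  then have "w [^] (1 - S) \<otimes> (x [^] (1 + S) \<otimes> x [^] (1 - S)) \<otimes> w [^] (1 + S) = \<one>"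
    using x w by (simp add: swap m_assoc)
  then have "x [^] (2::int) = inv (w [^] (1 - S)) \<otimes> inv (w [^] (1 + S))"
    using x w eq_inv_mult_inv_of_mult_eq_one int_pow_mult[OF x, of "1 + S" "1 - S"] by simp
  also have "\<dots> = w [^] (- 2::int)"
    using w int_pow_mult[OF w, of "S - 1" "- 1 - S"] by (simp flip: int_pow_neg)
  finally have "w = inv x"
    using x w even swap by (intro eq_inv_of_alternating_prod_eq) (auto simp: S_def)
  then show ?thesis
    using x y by (simp add: w_def m_assoc)
qed

end

lemma pclass_concat: "pclass R (concat ws) = multlist (presented_group R) (map (pclass R) ws)"
proof -
  interpret group "presented_group R"
    by (rule group_presented_group)
  show ?thesis
    by (induction ws) (simp_all add: one_presented_group flip: mult_pclass)
qed

lemma pclass_P_rel: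
  "pclass R (P_rel as bs) = group.alternating_prod (presented_group R) (pclass R gx)
    (pclass R gy \<otimes>\<^bsub>presented_group R\<^esub> pclass R gx \<otimes>\<^bsub>presented_group R\<^esub>
      inv\<^bsub>presented_group R\<^esub> pclass R gy)
    (as @ [1 - sum_list as]) (bs @ [1 - sum_list bs])"
proof -
  interpret group "presented_group R"
    by (rule group_presented_group)
  have block: "pclass R (gpow GX a @ gy @ gpow GX b @ gy_inv) =
      pclass R gx [^]\<^bsub>presented_group R\<^esub> a \<otimes>\<^bsub>presented_group R\<^esub> pclass R gy
      \<otimes>\<^bsub>presented_group R\<^esub> pclass R gx [^]\<^bsub>presented_group R\<^esub> b
      \<otimes>\<^bsub>presented_group R\<^esub> inv\<^bsub>presented_group R\<^esub> pclass R gy" for a b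
    by (simp add: gy_inv_eq_word_inv pclass_gpow m_assoc flip: mult_pclass inv_pclass gx_def)
  show ?thesis
    unfolding P_rel_def Let_def pclass_concat
    by (subst multlist_conj_blocks[symmetric])
      (auto simp: block intro!: arg_cong[where f = "multlist (presented_group R)"])
qed

lemma word_eq_P_rel_of_dicyclic_relator:
  assumes "gx @ gy @ gx @ gy_inv \<in> R" "length as = length bs"
  shows "word_eq R (P_rel as bs) []"
proof -
  interpret group "presented_group R"
    by (rule group_presented_group)
  have "pclass R gx \<otimes>\<^bsub>presented_group R\<^esub> pclass R gy \<otimes>\<^bsub>presented_group R\<^esub> pclass R gx
      \<otimes>\<^bsub>presented_group R\<^esub> inv\<^bsub>presented_group R\<^esub> pclass R gy = \<one>\<^bsub>presented_group R\<^esub>"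
    using pclass_relator[OF assms(1)] by (simp add: pclass_dicyclic_relator)
  then show ?thesis
    using assms(2) by (simp add: pclass_P_rel alternating_relator_of_dicyclic_relation flip: pclass_eq_one_iff)
qed

lemma word_eq_dicyclic_relator_of_P_rel:
  assumes "rel0 n \<in> R" "P_rel as (map uminus (rev as)) \<in> R" "\<forall>a\<in>set as. even a"
  shows "word_eq R (gx @ gy @ gx @ gy_inv) []"
proof -
  interpret group "presented_group R"
    by (rule group_presented_group)
  have "pclass R gx [^]\<^bsub>presented_group R\<^esub> int n \<otimes>\<^bsub>presented_group R\<^esub>
      inv\<^bsub>presented_group R\<^esub> (pclass R gy [^]\<^bsub>presented_group R\<^esub> (2::int)) = \<one>\<^bsub>presented_group R\<^esub>"
    using pclass_relator[OF assms(1)] by (simp add: pclass_rel0)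
  then have power: "pclass R gx [^]\<^bsub>presented_group R\<^esub> int n =
      pclass R gy [^]\<^bsub>presented_group R\<^esub> (2::int)"
    by (simp add: inv_solve_right')
  have "alternating_prod (pclass R gx)
      (pclass R gy \<otimes>\<^bsub>presented_group R\<^esub> pclass R gx \<otimes>\<^bsub>presented_group R\<^esub> inv\<^bsub>presented_group R\<^esub> pclass R gy)
      (as @ [1 - sum_list as]) (map uminus (rev as) @ [1 + sum_list as]) = \<one>\<^bsub>presented_group R\<^esub>"
    using pclass_relator[OF assms(2)] by (simp add: pclass_P_rel)
  then show ?thesis
    using power assms(3) dicyclic_relation_of_alternating_relator
    by (simp flip: pclass_eq_one_iff add: pclass_dicyclic_relator)
qed

lemma regularI:
  assumes "word_eq {rel0 n, r} (gx @ gy @ gx @ gy_inv) []"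
    and "word_eq {rel0 n, gx @ gy @ gx @ gy_inv} r []"
  shows "regular n r"
proof -
  have same_congruence: "word_eq {rel0 n, r} u v \<longleftrightarrow> word_eq {rel0 n, gx @ gy @ gx @ gy_inv} u v" for u v
  proof
    assume "word_eq {rel0 n, r} u v"
    then show "word_eq {rel0 n, gx @ gy @ gx @ gy_inv} u v"
      by (rule word_eq_mono_relators) (use assms(2) in \<open>auto intro: word_eq_relator\<close>)
  next
    assume "word_eq {rel0 n, gx @ gy @ gx @ gy_inv} u v"
    then show "word_eq {rel0 n, r} u v"
      by (rule word_eq_mono_relators) (use assms(1) in \<open>auto intro: word_eq_relator\<close>)
  qed
  then have "pclass {rel0 n, r} = pclass {rel0 n, gx @ gy @ gx @ gy_inv}"
    by (simp add: fun_eq_iff pclass_def)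
  moreover have "presented_group {rel0 n, r} = Q n"
    using calculation same_congruence by (simp add: Q_def presented_group_def)
  ultimately show ?thesis
    unfolding regular_def using id_iso by (metis id_apply)
qed

theorem theorem3p9:
  fixes n :: nat and ns :: "int list"
  assumes "n \<ge> 2"
    and "\<forall>a\<in>set ns. even a \<and> 1 \<le> a \<and> a \<le> 2 * int n - 2"
  shows "regular n (P_rel ns (map uminus (rev ns)))"
proof (rule regularI)
  show "word_eq {rel0 n, P_rel ns (map uminus (rev ns))} (gx @ gy @ gx @ gy_inv) []"
    using assms(2) by (intro word_eq_dicyclic_relator_of_P_rel) auto
  show "word_eq {rel0 n, gx @ gy @ gx @ gy_inv} (P_rel ns (map uminus (rev ns))) []"
    by (intro word_eq_P_rel_of_dicyclic_relator) auto
qed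

end
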